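(* Let $\mathbb{Q}\subset K$ be a totally imaginary Galois extension of finite degree. Then $\overline{N}_{K/\mathbb{Q}}=\mathbb{Q}^+$.
   Context: $\overline{N}_{K/\mathbb{Q}}$ is the set of all finite sums $\sum_iN_{K/\mathbb{Q}}(a_i)$ with $a_i\in K$ and $N_{K/\mathbb{Q}}$ the field norm; $\mathbb{Q}^+$ denotes the non-negative rationals. A number field is totally imaginary if none of its embeddings into $\mathbb{C}$ lands in $\mathbb{R}$. *)

theory Defs
  imports Complex_Main
begin

definition subfield_C :: "complex set \<Rightarrow> bool" where
  "subfield_C K \<longleftrightarrow> 0 \<in> K \<and> 1 \<in> K \<and>
     (\<forall>x\<in>K. \<forall>y\<in>K. x + y \<in> K \<and> x * y \<in> K) \<and>
     (\<forall>x\<in>K. - x \<in> K \<and> inverse x \<in> K)"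

definition finite_degree_over_Q :: "complex set \<Rightarrow> bool" where
  "finite_degree_over_Q K \<longleftrightarrow>
     (\<exists>B. finite B \<and> B \<subseteq> K \<and>
        (\<forall>x\<in>K. \<exists>c :: complex \<Rightarrow> rat. x = (\<Sum>b\<in>B. of_rat (c b) * b)))"

definition number_field :: "complex set \<Rightarrow> bool" where
  "number_field K \<longleftrightarrow> subfield_C K \<and> finite_degree_over_Q K"

text \<open>Field embeddings K \<rightarrow> C (ring homomorphisms, unital), normalised to 0
outside K so that distinct embeddings are distinct functions.\<close>
definition embeddings :: "complex set \<Rightarrow> (complex \<Rightarrow> complex) set" where
  "embeddings K = {\<sigma>.
     (\<forall>x\<in>K. \<forall>y\<in>K. \<sigma> (x + y) = \<sigma> x + \<sigma> y \<and> \<sigma> (x * y) = \<sigma> x * \<sigma> y) \<and>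
     \<sigma> 1 = 1 \<and> (\<forall>x. x \<notin> K \<longrightarrow> \<sigma> x = 0)}"

text \<open>K/Q Galois: every embedding of K into C maps K into K (normality;
separability is automatic in characteristic 0).\<close>
definition galois_over_Q :: "complex set \<Rightarrow> bool" where
  "galois_over_Q K \<longleftrightarrow> (\<forall>\<sigma>\<in>embeddings K. \<sigma> ` K \<subseteq> K)"

definition totally_imaginary :: "complex set \<Rightarrow> bool" where
  "totally_imaginary K \<longleftrightarrow> (\<forall>\<sigma>\<in>embeddings K. \<not> (\<sigma> ` K \<subseteq> \<real>))"

definition field_norm_Q :: "complex set \<Rightarrow> complex \<Rightarrow> complex" where
  "field_norm_Q K a = (\<Prod>\<sigma>\<in>embeddings K. \<sigma> a)"

definition sums_of_norms :: "complex set \<Rightarrow> complex set" where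
  "sums_of_norms K = {sum_list (map (field_norm_Q K) as) | as. set as \<subseteq> K}"

end

theory Submission
  imports Defs "HOL-Computational_Algebra.Fundamental_Theorem_Algebra" "HOL-Library.FuncSet"
begin

text \<open>Let a \<in> K. Since K is Galois, every embedding \<tau> permutes the embeddings by
composition, so \<tau> fixes N(a) = \<Prod>\<sigma> \<sigma>(a). An irrational element of K is moved by some
embedding: its minimal polynomial over \<rat> is separable, so it has a second root, and the
embedding \<rat>(x) \<rightarrow> \<complex> sending x to that root extends to K. Hence N(a) is rational.
Because no embedding is real, \<sigma> \<mapsto> cnj \<circ> \<sigma> is a fixed-point-free involution of the
embeddings, so N(a) is a product of factors \<sigma>(a) cnj(\<sigma>(a)) \<ge> 0.
Conversely, with n = [K:\<rat>] and q = a/b, we have q = a b^(n-1) N(1/b), a sum of a b^(n-1) norms.\<close>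

lemma subfield_C_0: "subfield_C E \<Longrightarrow> 0 \<in> E"
  and subfield_C_1: "subfield_C E \<Longrightarrow> 1 \<in> E"
  and subfield_C_add: "subfield_C E \<Longrightarrow> x \<in> E \<Longrightarrow> y \<in> E \<Longrightarrow> x + y \<in> E"
  and subfield_C_mult: "subfield_C E \<Longrightarrow> x \<in> E \<Longrightarrow> y \<in> E \<Longrightarrow> x * y \<in> E"
  and subfield_C_uminus: "subfield_C E \<Longrightarrow> x \<in> E \<Longrightarrow> - x \<in> E"
  and subfield_C_inverse: "subfield_C E \<Longrightarrow> x \<in> E \<Longrightarrow> inverse x \<in> E"
  by (simp_all add: subfield_C_def)

lemma subfield_C_diff: "subfield_C E \<Longrightarrow> x \<in> E \<Longrightarrow> y \<in> E \<Longrightarrow> x - y \<in> E"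
  by (metis diff_conv_add_uminus subfield_C_add subfield_C_uminus)

lemma subfield_C_divide: "subfield_C E \<Longrightarrow> x \<in> E \<Longrightarrow> y \<in> E \<Longrightarrow> x / y \<in> E"
  by (metis divide_inverse subfield_C_inverse subfield_C_mult)

lemma subfield_C_sum: "subfield_C E \<Longrightarrow> (\<And>i. i \<in> A \<Longrightarrow> f i \<in> E) \<Longrightarrow> sum f A \<in> E"
  by (induction A rule: infinite_finite_induct) (auto intro: subfield_C_0 subfield_C_add)

lemma subfield_C_prod: "subfield_C E \<Longrightarrow> (\<And>i. i \<in> A \<Longrightarrow> f i \<in> E) \<Longrightarrow> prod f A \<in> E"
  by (induction A rule: infinite_finite_induct) (auto intro: subfield_C_1 subfield_C_mult)

lemma subfield_C_power: "subfield_C E \<Longrightarrow> x \<in> E \<Longrightarrow> x ^ n \<in> E"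
  by (induction n) (auto intro: subfield_C_1 subfield_C_mult)

lemma subfield_C_of_nat: "subfield_C E \<Longrightarrow> of_nat n \<in> E"
  by (induction n) (auto intro: subfield_C_0 subfield_C_1 subfield_C_add)

lemma subfield_C_of_int: "subfield_C E \<Longrightarrow> of_int n \<in> E"
  by (cases n rule: int_cases2) (simp_all add: subfield_C_of_nat subfield_C_uminus)

lemma Rats_subset_subfield_C: "subfield_C E \<Longrightarrow> \<rat> \<subseteq> E"
proof
  fix x :: complex assume "subfield_C E" "x \<in> \<rat>"
  then obtain a b where "x = of_int a / of_int b" by (auto elim: Rats_cases')
  then show "x \<in> E" using \<open>subfield_C E\<close> by (simp add: subfield_C_divide subfield_C_of_int)
qed

lemma subfield_C_of_rat: "subfield_C E \<Longrightarrow> of_rat r \<in> E"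
  using Rats_subset_subfield_C Rats_of_rat by blast

lemma subfield_C_Rats: "subfield_C \<rat>"
  by (simp add: subfield_C_def)

definition hom_on :: "complex set \<Rightarrow> (complex \<Rightarrow> complex) \<Rightarrow> bool" where
  "hom_on E t \<longleftrightarrow> (\<forall>x\<in>E. \<forall>y\<in>E. t (x + y) = t x + t y \<and> t (x * y) = t x * t y) \<and> t 1 = 1"

lemma hom_on_add: "hom_on E t \<Longrightarrow> x \<in> E \<Longrightarrow> y \<in> E \<Longrightarrow> t (x + y) = t x + t y"
  and hom_on_mult: "hom_on E t \<Longrightarrow> x \<in> E \<Longrightarrow> y \<in> E \<Longrightarrow> t (x * y) = t x * t y"
  and hom_on_1: "hom_on E t \<Longrightarrow> t 1 = 1"
  by (simp_all add: hom_on_def)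

lemma hom_on_0: "hom_on E t \<Longrightarrow> 0 \<in> E \<Longrightarrow> t 0 = 0"
  using hom_on_add[of E t 0 0] by simp

lemma hom_on_uminus: "hom_on E t \<Longrightarrow> subfield_C E \<Longrightarrow> x \<in> E \<Longrightarrow> t (- x) = - t x"
  using hom_on_add[of E t x "- x"] hom_on_0[of E t] subfield_C_0 subfield_C_uminus
  by (simp add: eq_neg_iff_add_eq_0 add.commute)

lemma hom_on_diff: "hom_on E t \<Longrightarrow> subfield_C E \<Longrightarrow> x \<in> E \<Longrightarrow> y \<in> E \<Longrightarrow> t (x - y) = t x - t y"
  using hom_on_add[of E t x "- y"] hom_on_uminus[of E t y] subfield_C_uminus by simp

lemma hom_on_nonzero: "hom_on E t \<Longrightarrow> subfield_C E \<Longrightarrow> x \<in> E \<Longrightarrow> x \<noteq> 0 \<Longrightarrow> t x \<noteq> 0"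
  using hom_on_mult[of E t x "inverse x"] hom_on_1[of E t] subfield_C_inverse[of E x] by auto

lemma hom_on_inverse: "hom_on E t \<Longrightarrow> subfield_C E \<Longrightarrow> x \<in> E \<Longrightarrow> t (inverse x) = inverse (t x)"
  using hom_on_mult[of E t x "inverse x"] hom_on_1[of E t] hom_on_0[of E t] subfield_C_0[of E]
    subfield_C_inverse[of E x]
  by (cases "x = 0") (auto intro: inverse_unique[symmetric])

lemma hom_on_inj: "hom_on E t \<Longrightarrow> subfield_C E \<Longrightarrow> x \<in> E \<Longrightarrow> y \<in> E \<Longrightarrow> t x = t y \<Longrightarrow> x = y"
  using hom_on_diff[of E t x y] hom_on_nonzero[of E t "x - y"] subfield_C_diff[of E x y] by auto

lemma hom_on_of_nat: "hom_on E t \<Longrightarrow> subfield_C E \<Longrightarrow> t (of_nat n) = of_nat n"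
  by (induction n) (auto simp: hom_on_0 subfield_C_0 hom_on_1 hom_on_add subfield_C_1 subfield_C_of_nat)

lemma hom_on_of_int: "hom_on E t \<Longrightarrow> subfield_C E \<Longrightarrow> t (of_int n) = of_int n"
  by (cases n rule: int_cases2) (simp_all add: hom_on_of_nat hom_on_uminus subfield_C_of_nat)

lemma hom_on_Rats:
  assumes "hom_on E t" "subfield_C E" "x \<in> \<rat>"
  shows "t x = x"
proof -
  obtain a b where "x = of_int a / of_int b" using assms(3) by (auto elim: Rats_cases')
  then show ?thesis using assms(1,2)
    by (simp add: divide_inverse hom_on_mult hom_on_inverse hom_on_of_int subfield_C_of_int
        subfield_C_inverse)
qed

lemma hom_on_sum: "hom_on E t \<Longrightarrow> subfield_C E \<Longrightarrow> (\<And>i. i \<in> A \<Longrightarrow> f i \<in> E) \<Longrightarrow>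
    t (sum f A) = (\<Sum>i\<in>A. t (f i))"
  by (induction A rule: infinite_finite_induct) (auto simp: hom_on_0 subfield_C_0 hom_on_add subfield_C_sum)

lemma hom_on_prod: "hom_on E t \<Longrightarrow> subfield_C E \<Longrightarrow> (\<And>i. i \<in> A \<Longrightarrow> f i \<in> E) \<Longrightarrow>
    t (prod f A) = (\<Prod>i\<in>A. t (f i))"
  by (induction A rule: infinite_finite_induct) (auto simp: hom_on_1 hom_on_mult subfield_C_prod)

lemma hom_on_rat_combination: "hom_on E t \<Longrightarrow> subfield_C E \<Longrightarrow> B \<subseteq> E \<Longrightarrow>
    t (\<Sum>b\<in>B. of_rat (c b) * b) = (\<Sum>b\<in>B. of_rat (c b) * t b)"
proof -
  assume t: "hom_on E t" and E: "subfield_C E" and B: "B \<subseteq> E"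
  have "t (\<Sum>b\<in>B. of_rat (c b) * b) = (\<Sum>b\<in>B. t (of_rat (c b) * b))"
    using B by (intro hom_on_sum[OF t E]) (auto intro: subfield_C_mult subfield_C_of_rat E)
  also have "\<dots> = (\<Sum>b\<in>B. of_rat (c b) * t b)"
    using B hom_on_mult[OF t subfield_C_of_rat[OF E]] hom_on_Rats[OF t E Rats_of_rat]
    by (intro sum.cong) auto
  finally show ?thesis .
qed

definition poly_over :: "complex set \<Rightarrow> complex poly \<Rightarrow> bool" where
  "poly_over E f \<longleftrightarrow> (\<forall>i. coeff f i \<in> E)"

lemma algebraic_iff_poly_over_Rats: "algebraic x \<longleftrightarrow> (\<exists>p. poly_over \<rat> p \<and> p \<noteq> 0 \<and> poly p x = 0)"
  by (simp add: algebraic_altdef poly_over_def)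

lemma poly_over_mono: "poly_over A f \<Longrightarrow> A \<subseteq> B \<Longrightarrow> poly_over B f"
  unfolding poly_over_def by auto

lemma poly_over_pCons: "poly_over E (pCons a f) \<longleftrightarrow> a \<in> E \<and> poly_over E f"
  unfolding poly_over_def by (auto simp: coeff_pCons split: nat.splits)

lemma poly_over_0 [simp]: "subfield_C E \<Longrightarrow> poly_over E 0"
  by (simp add: poly_over_def subfield_C_0)

lemma poly_over_const: "subfield_C E \<Longrightarrow> a \<in> E \<Longrightarrow> poly_over E [:a:]"
  by (simp add: poly_over_pCons)

lemma poly_over_X: "subfield_C E \<Longrightarrow> poly_over E [:0, 1:]"
  by (simp add: poly_over_pCons subfield_C_0 subfield_C_1)

lemma poly_over_add: "subfield_C E \<Longrightarrow> poly_over E f \<Longrightarrow> poly_over E g \<Longrightarrow> poly_over E (f + g)"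
  and poly_over_uminus: "subfield_C E \<Longrightarrow> poly_over E f \<Longrightarrow> poly_over E (- f)"
  and poly_over_diff: "subfield_C E \<Longrightarrow> poly_over E f \<Longrightarrow> poly_over E g \<Longrightarrow> poly_over E (f - g)"
  and poly_over_mult: "subfield_C E \<Longrightarrow> poly_over E f \<Longrightarrow> poly_over E g \<Longrightarrow> poly_over E (f * g)"
  and poly_over_monom: "subfield_C E \<Longrightarrow> a \<in> E \<Longrightarrow> poly_over E (monom a k)"
  and poly_over_smult: "subfield_C E \<Longrightarrow> a \<in> E \<Longrightarrow> poly_over E f \<Longrightarrow> poly_over E (smult a f)"
  and poly_over_pderiv: "subfield_C E \<Longrightarrow> poly_over E f \<Longrightarrow> poly_over E (pderiv f)"
  unfolding poly_over_def
  by (simp_all add: coeff_mult coeff_monom coeff_pderiv subfield_C_0 subfield_C_1 subfield_C_add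
      subfield_C_uminus subfield_C_diff subfield_C_mult subfield_C_sum subfield_C_of_nat)

lemma poly_over_sum: "subfield_C E \<Longrightarrow> (\<And>i. i \<in> A \<Longrightarrow> poly_over E (f i)) \<Longrightarrow> poly_over E (sum f A)"
  by (induction A rule: infinite_finite_induct) (auto intro: poly_over_add)

lemma poly_in_subfield_C: "subfield_C E \<Longrightarrow> poly_over E f \<Longrightarrow> x \<in> E \<Longrightarrow> poly f x \<in> E"
  by (induction f) (auto simp: poly_over_pCons subfield_C_add subfield_C_mult subfield_C_0)

lemma coeff_map_poly_hom_on: "hom_on E t \<Longrightarrow> subfield_C E \<Longrightarrow> coeff (map_poly t f) n = t (coeff f n)"
  by (rule coeff_map_poly) (simp add: hom_on_0 subfield_C_0)

lemma map_poly_hom_on_diff: "hom_on E t \<Longrightarrow> subfield_C E \<Longrightarrow> poly_over E f \<Longrightarrow> poly_over E g \<Longrightarrow>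
    map_poly t (f - g) = map_poly t f - map_poly t g"
  and map_poly_hom_on_add: "hom_on E t \<Longrightarrow> subfield_C E \<Longrightarrow> poly_over E f \<Longrightarrow> poly_over E g \<Longrightarrow>
    map_poly t (f + g) = map_poly t f + map_poly t g"
  by (auto intro!: poly_eqI simp: coeff_map_poly_hom_on hom_on_diff hom_on_add poly_over_def)

lemma map_poly_hom_on_mult:
  assumes t: "hom_on E t" and E: "subfield_C E" and fg: "poly_over E f" "poly_over E g"
  shows "map_poly t (f * g) = map_poly t f * map_poly t g"
proof (rule poly_eqI)
  fix n
  have "coeff (map_poly t (f * g)) n = t (\<Sum>i\<le>n. coeff f i * coeff g (n - i))"
    by (simp add: coeff_map_poly_hom_on[OF t E] coeff_mult)
  also have "\<dots> = (\<Sum>i\<le>n. t (coeff f i) * t (coeff g (n - i)))"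
    using fg by (simp add: hom_on_sum[OF t E] hom_on_mult[OF t] subfield_C_mult[OF E] poly_over_def)
  also have "\<dots> = coeff (map_poly t f * map_poly t g) n"
    by (simp add: coeff_mult coeff_map_poly_hom_on[OF t E])
  finally show "coeff (map_poly t (f * g)) n = coeff (map_poly t f * map_poly t g) n" .
qed

lemma map_poly_hom_on_const: "hom_on E t \<Longrightarrow> subfield_C E \<Longrightarrow> map_poly t [:a:] = [:t a:]"
  and map_poly_hom_on_X: "hom_on E t \<Longrightarrow> subfield_C E \<Longrightarrow> map_poly t [:0, 1:] = [:0, 1:]"
  by (auto intro!: poly_eqI simp: coeff_map_poly_hom_on coeff_pCons hom_on_0 hom_on_1 subfield_C_0
      split: nat.splits)

lemma map_poly_hom_on_Rats: "hom_on E t \<Longrightarrow> subfield_C E \<Longrightarrow> poly_over \<rat> f \<Longrightarrow> map_poly t f = f"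
  by (rule poly_eqI) (simp add: coeff_map_poly_hom_on hom_on_Rats poly_over_def)

lemma hom_on_poly: "hom_on E t \<Longrightarrow> subfield_C E \<Longrightarrow> poly_over E f \<Longrightarrow> x \<in> E \<Longrightarrow>
    t (poly f x) = poly (map_poly t f) (t x)"
  by (induction f) (simp_all add: map_poly_pCons hom_on_0 subfield_C_0 poly_over_pCons hom_on_add
      hom_on_mult poly_in_subfield_C subfield_C_mult)

lemma degree_map_poly_hom_on:
  assumes t: "hom_on E t" and E: "subfield_C E" and f: "poly_over E f"
  shows "degree (map_poly t f) = degree f"
proof (cases "f = 0")
  case False
  then have "coeff (map_poly t f) (degree f) \<noteq> 0"
    using f by (simp add: coeff_map_poly_hom_on[OF t E] hom_on_nonzero[OF t E] poly_over_def)
  then show ?thesis by (meson antisym le_degree map_poly_degree_leq)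
qed simp

lemma poly_over_div_mod:
  assumes E: "subfield_C E" and q: "poly_over E q" "q \<noteq> 0" and f: "poly_over E f"
  shows "\<exists>s r. poly_over E s \<and> poly_over E r \<and> f = q * s + r \<and> (r = 0 \<or> degree r < degree q)"
  using f
proof (induction "degree f" arbitrary: f rule: less_induct)
  case less
  show ?case
  proof (cases "f = 0 \<or> degree f < degree q")
    case True
    then show ?thesis using less.prems E by (intro exI[of _ 0] exI[of _ f]) auto
  next
    case False
    then have f0: "f \<noteq> 0" and dg: "degree q \<le> degree f" by auto
    define c where "c = lead_coeff f / lead_coeff q"
    define k where "k = degree f - degree q"
    define f' where "f' = f - q * monom c k"
    have c: "c \<in> E" "c \<noteq> 0"
      using q less.prems f0 E unfolding c_def poly_over_def by (auto intro: subfield_C_divide)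
    have m: "poly_over E (monom c k)" using E c poly_over_monom by blast
    have f': "poly_over E f'" unfolding f'_def using E less.prems q m poly_over_diff poly_over_mult by blast
    have "degree (q * monom c k) = degree f"
      using c q dg by (simp add: degree_mult_eq degree_monom_eq k_def)
    then have "degree f' \<le> degree f" unfolding f'_def by (metis degree_diff_le le_refl)
    have "coeff (q * monom c k) (degree f) = lead_coeff f"
      using coeff_mult_degree_sum[of q "monom c k"] c q dg by (simp add: degree_monom_eq k_def c_def)
    then have "coeff f' (degree f) = 0" by (simp add: f'_def)
    show ?thesis
    proof (cases "f' = 0")
      case True
      then have "f = q * monom c k + 0" by (simp add: f'_def)
      then show ?thesis using m E by (intro exI[of _ "monom c k"] exI[of _ 0]) auto
    next
      case False
      with \<open>coeff f' (degree f) = 0\<close> \<open>degree f' \<le> degree f\<close> have "degree f' < degree f"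
        by (metis leading_coeff_0_iff order_le_imp_less_or_eq)
      then obtain s r where sr: "poly_over E s" "poly_over E r" "f' = q * s + r" "r = 0 \<or> degree r < degree q"
        using less.hyps f' by blast
      have "f = q * (s + monom c k) + r" using sr(3) by (simp add: f'_def algebra_simps)
      then show ?thesis using sr poly_over_add[OF E sr(1) m] by blast
    qed
  qed
qed

definition minimal_poly :: "complex set \<Rightarrow> complex \<Rightarrow> complex poly \<Rightarrow> bool" where
  "minimal_poly E b q \<longleftrightarrow> poly_over E q \<and> q \<noteq> 0 \<and> poly q b = 0 \<and>
     (\<forall>f. poly_over E f \<and> f \<noteq> 0 \<and> poly f b = 0 \<longrightarrow> degree q \<le> degree f)"

lemma minimal_poly_exists:
  assumes "poly_over E p" "p \<noteq> 0" "poly p b = 0"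
  obtains q where "minimal_poly E b q"
proof -
  have "\<exists>q. (poly_over E q \<and> q \<noteq> 0 \<and> poly q b = 0) \<and>
     (\<forall>f. (poly_over E f \<and> f \<noteq> 0 \<and> poly f b = 0) \<longrightarrow> degree q \<le> degree f)"
    by (rule ex_has_least_nat[of _ p]) (use assms in auto)
  then show ?thesis using that unfolding minimal_poly_def by blast
qed

lemma minimal_poly_dvd:
  assumes E: "subfield_C E" and q: "minimal_poly E b q" and f: "poly_over E f" "poly f b = 0"
  obtains s where "poly_over E s" "f = q * s"
proof -
  obtain s r where sr: "poly_over E s" "poly_over E r" "f = q * s + r" "r = 0 \<or> degree r < degree q"
    using poly_over_div_mod[OF E _ _ f(1)] q unfolding minimal_poly_def by blast
  have "poly r b = 0" using sr(3) f(2) q by (simp add: minimal_poly_def)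
  then have "r = 0" using sr(2,4) q unfolding minimal_poly_def by force
  then show ?thesis using sr that by auto
qed

lemma degree_minimal_poly_pos:
  assumes "minimal_poly E b q"
  shows "degree q \<noteq> 0"
proof
  assume "degree q = 0"
  then obtain a where "q = [:a:]" by (rule degree_eq_zeroE)
  then show False using assms by (simp add: minimal_poly_def)
qed

definition adjoin :: "complex set \<Rightarrow> complex \<Rightarrow> complex set" where
  "adjoin E b = {poly f b | f. poly_over E f}"

lemma adjoin_add: "subfield_C E \<Longrightarrow> x \<in> adjoin E b \<Longrightarrow> y \<in> adjoin E b \<Longrightarrow> x + y \<in> adjoin E b"
  and adjoin_mult: "subfield_C E \<Longrightarrow> x \<in> adjoin E b \<Longrightarrow> y \<in> adjoin E b \<Longrightarrow> x * y \<in> adjoin E b"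
  and adjoin_uminus: "subfield_C E \<Longrightarrow> x \<in> adjoin E b \<Longrightarrow> - x \<in> adjoin E b"
  unfolding adjoin_def
  by (auto intro: poly_add[symmetric] poly_mult[symmetric] poly_minus[symmetric]
      poly_over_add poly_over_mult poly_over_uminus)

lemma adjoin_base: "subfield_C E \<Longrightarrow> x \<in> E \<Longrightarrow> x \<in> adjoin E b"
  and adjoin_gen: "subfield_C E \<Longrightarrow> b \<in> adjoin E b"
  unfolding adjoin_def using poly_over_const poly_over_X
  by (metis (mono_tags, lifting) mem_Collect_eq poly_const_conv, force)

lemma poly_in_adjoin: "subfield_C E \<Longrightarrow> poly_over E g \<Longrightarrow> z \<in> adjoin E b \<Longrightarrow> poly g z \<in> adjoin E b"
  by (induction g) (auto simp: poly_over_pCons intro: adjoin_add adjoin_mult adjoin_base subfield_C_0)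

lemma adjoin_subset: "subfield_C K \<Longrightarrow> E \<subseteq> K \<Longrightarrow> b \<in> K \<Longrightarrow> adjoin E b \<subseteq> K"
  unfolding adjoin_def using poly_in_subfield_C poly_over_mono by blast

text \<open>If p = X^k (a + X g) with a \<noteq> 0, then inverse z = - g(z) / a.\<close>
lemma inverse_poly_over_Rats:
  assumes "z \<noteq> 0"
  shows "poly_over \<rat> p \<Longrightarrow> p \<noteq> 0 \<Longrightarrow> poly p z = 0 \<Longrightarrow> \<exists>g. poly_over \<rat> g \<and> inverse z = poly g z"
proof (induction p)
  case (pCons a p)
  show ?case
  proof (cases "a = 0")
    case True
    then show ?thesis using pCons assms by (simp add: poly_over_pCons)
  next
    case False
    have "a \<in> \<rat>" "poly_over \<rat> p" using pCons.prems by (auto simp: poly_over_pCons)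
    moreover have "a + z * poly p z = 0" using pCons.prems by simp
    then have "inverse z = poly (smult (- 1 / a) p) z"
      using False assms by (simp add: field_simps) (metis add.commute add_eq_0_iff mult.commute)
    ultimately show ?thesis using subfield_C_Rats
      by (intro exI[of _ "smult (- 1 / a) p"] conjI poly_over_smult) auto
  qed
qed simp

lemma subfield_C_adjoin:
  assumes E: "subfield_C E" and alg: "\<And>z. z \<in> adjoin E b \<Longrightarrow> algebraic z"
  shows "subfield_C (adjoin E b)"
  unfolding subfield_C_def
proof (intro conjI ballI)
  show "0 \<in> adjoin E b" "1 \<in> adjoin E b" using E by (auto intro: adjoin_base subfield_C_0 subfield_C_1)
next
  fix x y assume "x \<in> adjoin E b" "y \<in> adjoin E b"
  then show "x + y \<in> adjoin E b" "x * y \<in> adjoin E b" using E adjoin_add adjoin_mult by auto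
next
  fix x assume x: "x \<in> adjoin E b"
  then show "- x \<in> adjoin E b" using E adjoin_uminus by auto
  show "inverse x \<in> adjoin E b"
  proof (cases "x = 0")
    case False
    obtain p where "poly_over \<rat> p" "p \<noteq> 0" "poly p x = 0"
      using alg[OF x] by (auto simp: algebraic_iff_poly_over_Rats)
    then obtain g where g: "poly_over \<rat> g" "inverse x = poly g x"
      using inverse_poly_over_Rats[OF False] by blast
    then show ?thesis
      using poly_in_adjoin[OF E _ x] poly_over_mono Rats_subset_subfield_C[OF E] by metis
  qed (use E in \<open>auto intro: adjoin_base subfield_C_0\<close>)
qed

lemma minimal_poly_root_map_poly:
  assumes E: "subfield_C E" and t: "hom_on E t" and q: "minimal_poly E b q"
    and y: "poly (map_poly t q) y = 0" and f: "poly_over E f" "poly f b = 0"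
  shows "poly (map_poly t f) y = 0"
proof -
  obtain s where "poly_over E s" "f = q * s" using minimal_poly_dvd[OF E q f] .
  then have "map_poly t f = map_poly t q * map_poly t s"
    using q map_poly_hom_on_mult[OF t E] unfolding minimal_poly_def by blast
  then show ?thesis using y by simp
qed

text \<open>f(b) \<mapsto> t(f)(y) is well defined because q divides every f with f(b) = 0.\<close>
lemma hom_on_adjoin_extend:
  assumes E: "subfield_C E" and t: "hom_on E t" and q: "minimal_poly E b q"
    and y: "poly (map_poly t q) y = 0"
  obtains t' where "hom_on (adjoin E b) t'" "\<forall>x\<in>E. t' x = t x" "t' b = y"
proof -
  have well_defined: "poly (map_poly t f) y = poly (map_poly t g) y"
    if "poly_over E f" "poly_over E g" "poly f b = poly g b" for f g
    using minimal_poly_root_map_poly[OF E t q y, of "f - g"] that poly_over_diff[OF E] map_poly_hom_on_diff[OF t E that(1,2)] by simp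
  define t' where "t' z = poly (map_poly t (SOME f. poly_over E f \<and> poly f b = z)) y" for z
  have t'_poly: "t' (poly f b) = poly (map_poly t f) y" if "poly_over E f" for f
  proof -
    have "\<exists>g. poly_over E g \<and> poly g b = poly f b" using that by blast
    then have "poly_over E (SOME g. poly_over E g \<and> poly g b = poly f b) \<and>
          poly (SOME g. poly_over E g \<and> poly g b = poly f b) b = poly f b"
      by (rule someI_ex)
    then show ?thesis unfolding t'_def using well_defined that by blast
  qed
  have "hom_on (adjoin E b) t'"
    unfolding hom_on_def
  proof (intro conjI ballI)
    fix x z assume "x \<in> adjoin E b" "z \<in> adjoin E b"
    then obtain f g where fg: "poly_over E f" "poly_over E g" "x = poly f b" "z = poly g b"
      unfolding adjoin_def by blast
    show "t' (x + z) = t' x + t' z"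
      using t'_poly[of "f + g"] poly_over_add[OF E fg(1,2)] map_poly_hom_on_add[OF t E fg(1,2)]
        t'_poly fg by simp
    show "t' (x * z) = t' x * t' z"
      using t'_poly[of "f * g"] poly_over_mult[OF E fg(1,2)] map_poly_hom_on_mult[OF t E fg(1,2)]
        t'_poly fg by simp
  next
    show "t' 1 = 1"
      using t'_poly[OF poly_over_const[OF E subfield_C_1[OF E]]] map_poly_hom_on_const[OF t E]
        hom_on_1[OF t] by simp
  qed
  moreover have "t' x = t x" if "x \<in> E" for x
    using t'_poly[OF poly_over_const[OF E that]] map_poly_hom_on_const[OF t E] by simp
  moreover have "t' b = y"
    using t'_poly[OF poly_over_X[OF E]] map_poly_hom_on_X[OF t E] by simp
  ultimately show ?thesis using that by blast
qed

interpretation rat_vs: vector_space "\<lambda>(r::rat) (z::complex). of_rat r * z"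
  by unfold_locales (auto simp: algebra_simps of_rat_add of_rat_mult)

lemma rat_combination_in_span: "(\<Sum>b\<in>B. of_rat (c b) * b) \<in> rat_vs.span B"
  by (intro rat_vs.span_sum rat_vs.span_scale[of _ _ "c _", simplified] rat_vs.span_base)

lemma algebraic_if_powers_dependent:
  assumes "finite N" and inj: "inj_on (\<lambda>i. y ^ i) N" and dep: "rat_vs.dependent ((\<lambda>i. y ^ i) ` N)"
  shows "algebraic y"
proof -
  obtain t u where tu: "t \<subseteq> (\<lambda>i. y ^ i) ` N" "(\<Sum>v\<in>t. of_rat (u v) * v) = 0" "\<exists>v\<in>t. u v \<noteq> 0"
    using dep unfolding rat_vs.dependent_explicit by blast
  define I where "I = {i \<in> N. y ^ i \<in> t}"
  have inj_I: "inj_on (\<lambda>i. y ^ i) I" using inj unfolding I_def by (rule inj_on_subset) auto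
  have image: "(\<lambda>i. y ^ i) ` I = t" using tu(1) unfolding I_def by auto
  obtain j where j: "j \<in> I" "u (y ^ j) \<noteq> 0" using tu(3) image by blast
  define p where "p = (\<Sum>i\<in>I. monom (of_rat (u (y ^ i)) :: complex) i)"
  have "poly p y = (\<Sum>i\<in>I. of_rat (u (y ^ i)) * y ^ i)"
    by (simp add: p_def poly_sum poly_monom)
  also have "\<dots> = 0"
    using sum.reindex[OF inj_I, of "\<lambda>v. of_rat (u v) * v"] image tu(2) by simp
  finally have "poly p y = 0" .
  moreover have "coeff p j = of_rat (u (y ^ j))"
    using j(1) \<open>finite N\<close> by (simp add: I_def p_def coeff_sum coeff_monom eq_commute)
  then have "p \<noteq> 0" using j(2) by auto
  moreover have "poly_over \<rat> p"
    unfolding p_def using subfield_C_Rats by (intro poly_over_sum poly_over_monom) auto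
  ultimately show ?thesis unfolding algebraic_iff_poly_over_Rats by blast
qed

lemma algebraic_if_powers_in_span:
  assumes B: "finite B" and y: "\<And>i. y ^ i \<in> rat_vs.span B"
  shows "algebraic y"
proof (cases "inj_on (\<lambda>i. y ^ i) {..card B}")
  case False
  then obtain i j where ij: "i \<noteq> j" "y ^ i = y ^ j" unfolding inj_on_def by blast
  define p where "p = monom (1::complex) j - monom 1 i"
  have "coeff p j = 1" using ij by (simp add: p_def coeff_monom)
  moreover have "poly p y = 0" using ij by (simp add: p_def poly_monom)
  moreover have "poly_over \<rat> p"
    unfolding p_def using subfield_C_Rats by (intro poly_over_diff poly_over_monom) auto
  ultimately show ?thesis unfolding algebraic_iff_poly_over_Rats by force
next
  case True
  have "rat_vs.dependent ((\<lambda>i. y ^ i) ` {..card B})"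
  proof (rule ccontr)
    assume "\<not> rat_vs.dependent ((\<lambda>i. y ^ i) ` {..card B})"
    then have "card ((\<lambda>i. y ^ i) ` {..card B}) \<le> card B"
      using rat_vs.independent_span_bound[OF B] y by blast
    then show False using True by (simp add: card_image)
  qed
  then show ?thesis using True by (intro algebraic_if_powers_dependent) auto
qed

lemma number_field_algebraic:
  assumes K: "number_field K" and y: "y \<in> K"
  shows "algebraic y"
proof -
  obtain B where B: "finite B" "\<forall>x\<in>K. \<exists>c. x = (\<Sum>b\<in>B. of_rat (c b) * b)"
    using K unfolding number_field_def finite_degree_over_Q_def by blast
  have "y ^ i \<in> K" for i using K y subfield_C_power by (simp add: number_field_def)
  then show ?thesis using B rat_combination_in_span by (metis algebraic_if_powers_in_span)
qed

lemma embeddings_hom_on: "\<sigma> \<in> embeddings K \<Longrightarrow> hom_on K \<sigma>"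
  unfolding embeddings_def hom_on_def by blast

lemma embeddings_outside: "\<sigma> \<in> embeddings K \<Longrightarrow> x \<notin> K \<Longrightarrow> \<sigma> x = 0"
  unfolding embeddings_def by blast

lemma embeddings_eqI:
  assumes K: "subfield_C K" and B: "B \<subseteq> K" "\<forall>x\<in>K. \<exists>c. x = (\<Sum>b\<in>B. of_rat (c b) * b)"
    and \<sigma>: "\<sigma> \<in> embeddings K" and \<tau>: "\<tau> \<in> embeddings K" and eq: "\<And>b. b \<in> B \<Longrightarrow> \<sigma> b = \<tau> b"
  shows "\<sigma> = \<tau>"
proof
  fix x
  show "\<sigma> x = \<tau> x"
  proof (cases "x \<in> K")
    case True
    then obtain c where "x = (\<Sum>b\<in>B. of_rat (c b) * b)" using B(2) by blast
    then show ?thesis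
      using hom_on_rat_combination[OF embeddings_hom_on[OF \<sigma>] K B(1)]
        hom_on_rat_combination[OF embeddings_hom_on[OF \<tau>] K B(1)] B(1) eq
      by (simp cong: sum.cong)
  qed (use \<sigma> \<tau> embeddings_outside in metis)
qed

text \<open>An embedding is determined by its values on a finite spanning set B, and it maps each
b \<in> B to one of the finitely many roots of a rational polynomial vanishing at b.\<close>
lemma finite_embeddings:
  assumes K: "number_field K"
  shows "finite (embeddings K)"
proof -
  have sf: "subfield_C K" using K by (simp add: number_field_def)
  obtain B where B: "finite B" "B \<subseteq> K" "\<forall>x\<in>K. \<exists>c. x = (\<Sum>b\<in>B. of_rat (c b) * b)"
    using K unfolding number_field_def finite_degree_over_Q_def by blast
  define P where "P b = (SOME p. poly_over \<rat> p \<and> p \<noteq> 0 \<and> poly p b = 0)" for b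
  have P: "poly_over \<rat> (P b) \<and> P b \<noteq> 0 \<and> poly (P b) b = 0" if "b \<in> K" for b
    unfolding P_def using number_field_algebraic[OF K that]
    unfolding algebraic_iff_poly_over_Rats by (rule someI_ex)
  define R where "R b = {z. poly (P b) z = 0}" for b
  have "restrict \<sigma> B \<in> (\<Pi>\<^sub>E b\<in>B. R b)" if \<sigma>: "\<sigma> \<in> embeddings K" for \<sigma>
  proof -
    have "poly (P b) (\<sigma> b) = 0" if "b \<in> K" for b
      using hom_on_poly[OF embeddings_hom_on[OF \<sigma>] sf _ that] P[OF that]
        map_poly_hom_on_Rats[OF embeddings_hom_on[OF \<sigma>] sf]
        hom_on_0[OF embeddings_hom_on[OF \<sigma>] subfield_C_0[OF sf]]
        poly_over_mono[OF _ Rats_subset_subfield_C[OF sf]]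
      by metis
    then show ?thesis using B(2) by (auto simp: R_def)
  qed
  moreover have "inj_on (\<lambda>\<sigma>. restrict \<sigma> B) (embeddings K)"
    by (rule inj_onI, rule embeddings_eqI[OF sf B(2,3)]) (auto, metis restrict_apply')
  moreover have "finite (\<Pi>\<^sub>E b\<in>B. R b)"
    using B P unfolding R_def by (intro finite_PiE poly_roots_finite) auto
  ultimately show ?thesis by (metis (no_types, lifting) image_subsetI inj_on_finite)
qed

lemma hom_on_extend_to_list:
  assumes K: "number_field K"
  shows "set bs \<subseteq> K \<Longrightarrow> subfield_C E \<Longrightarrow> E \<subseteq> K \<Longrightarrow> hom_on E t \<Longrightarrow>
    \<exists>E' t'. subfield_C E' \<and> E \<subseteq> E' \<and> set bs \<subseteq> E' \<and> E' \<subseteq> K \<and> hom_on E' t' \<and> (\<forall>x\<in>E. t' x = t x)"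
proof (induction bs arbitrary: E t)
  case Nil
  then show ?case by (intro exI[of _ E] exI[of _ t]) auto
next
  case (Cons b bs)
  then have b: "b \<in> K" and E: "subfield_C E" "E \<subseteq> K" and t: "hom_on E t" by auto
  obtain p where "poly_over \<rat> p" "p \<noteq> 0" "poly p b = 0"
    using number_field_algebraic[OF K b] unfolding algebraic_iff_poly_over_Rats by blast
  then obtain q where q: "minimal_poly E b q"
    using minimal_poly_exists poly_over_mono Rats_subset_subfield_C[OF E(1)] by metis
  have "degree (map_poly t q) \<noteq> 0"
    using degree_map_poly_hom_on[OF t E(1)] q degree_minimal_poly_pos unfolding minimal_poly_def by metis
  then have "\<not> constant (poly (map_poly t q))" by (simp add: constant_degree)
  then obtain y where "poly (map_poly t q) y = 0" using fundamental_theorem_of_algebra by blast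
  then obtain t1 where t1: "hom_on (adjoin E b) t1" "\<forall>x\<in>E. t1 x = t x"
    using hom_on_adjoin_extend[OF E(1) t q] by metis
  have sub: "adjoin E b \<subseteq> K"
    using adjoin_subset[OF _ E(2) b] K by (simp add: number_field_def)
  have "subfield_C (adjoin E b)"
    using subfield_C_adjoin[OF E(1)] sub number_field_algebraic[OF K] by blast
  then obtain E' t' where E': "subfield_C E'" "adjoin E b \<subseteq> E'" "set bs \<subseteq> E'" "E' \<subseteq> K"
     "hom_on E' t'" "\<forall>x\<in>adjoin E b. t' x = t1 x"
    using Cons.IH[OF _ _ sub t1(1)] Cons.prems(1) by auto
  moreover have "E \<subseteq> adjoin E b" "b \<in> adjoin E b" using adjoin_base[OF E(1)] adjoin_gen[OF E(1)] by auto
  ultimately show ?case using t1(2) by (intro exI[of _ E'] exI[of _ t']) auto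
qed

lemma hom_on_extend_to_embedding:
  assumes K: "number_field K" and E: "subfield_C E" "E \<subseteq> K" and t: "hom_on E t"
  obtains \<sigma> where "\<sigma> \<in> embeddings K" "\<forall>x\<in>E. \<sigma> x = t x"
proof -
  have sf: "subfield_C K" using K by (simp add: number_field_def)
  obtain B where B: "finite B" "B \<subseteq> K" "\<forall>x\<in>K. \<exists>c. x = (\<Sum>b\<in>B. of_rat (c b) * b)"
    using K unfolding number_field_def finite_degree_over_Q_def by blast
  obtain bs where bs: "set bs = B" using finite_list[OF B(1)] by blast
  obtain E' t' where E': "subfield_C E'" "E \<subseteq> E'" "B \<subseteq> E'" "E' \<subseteq> K" "hom_on E' t'"
    "\<forall>x\<in>E. t' x = t x"
    using hom_on_extend_to_list[OF K _ E t] bs B(2) by blast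
  have "K \<subseteq> E'"
  proof
    fix z assume "z \<in> K"
    then obtain c where "z = (\<Sum>b\<in>B. of_rat (c b) * b)" using B(3) by blast
    then show "z \<in> E'"
      using E'(1,3) by (auto intro!: subfield_C_sum subfield_C_mult subfield_C_of_rat)
  qed
  with E'(4) have "E' = K" by blast
  define \<sigma> where "\<sigma> z = (if z \<in> K then t' z else 0)" for z
  have "\<sigma> \<in> embeddings K"
    using E'(5) \<open>E' = K\<close> sf
    unfolding embeddings_def hom_on_def \<sigma>_def by (auto simp: subfield_C_add subfield_C_mult subfield_C_1)
  moreover have "\<forall>x\<in>E. \<sigma> x = t x" using E'(6) E(2) by (auto simp: \<sigma>_def)
  ultimately show ?thesis using that by blast
qed

text \<open>Separability: writing q = (X - x) h, we get h(x) = q'(x) \<noteq> 0 because q' is a nonzero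
rational polynomial of smaller degree than q; any root of h is the second root.\<close>
lemma minimal_poly_Rats_second_root:
  assumes q: "minimal_poly \<rat> x q" and x: "x \<notin> \<rat>"
  obtains y where "y \<noteq> x" "poly q y = 0"
proof -
  have qQ: "poly_over \<rat> q" "q \<noteq> 0" "poly q x = 0" using q by (auto simp: minimal_poly_def)
  have "degree (pderiv q) < degree q" "pderiv q \<noteq> 0"
    using degree_minimal_poly_pos[OF q] degree_pderiv[of q] by (auto simp: pderiv_eq_0_iff)
  then have q'x: "poly (pderiv q) x \<noteq> 0"
    using q poly_over_pderiv[OF subfield_C_Rats qQ(1)] unfolding minimal_poly_def by force
  obtain h where h: "q = [:-x, 1:] * h" using qQ(3) poly_eq_0_iff_dvd by (metis dvdE)
  have "pderiv q = [:-x, 1:] * pderiv h + h * pderiv [:-x, 1:]" unfolding h by (rule pderiv_mult)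
  then have "poly (pderiv q) x = poly h x" by (simp add: pderiv_pCons)
  with q'x have hx: "poly h x \<noteq> 0" by simp
  have "degree q \<noteq> 1"
  proof
    assume "degree q = 1"
    then obtain a c where "q = [:a, c:]" "c \<noteq> 0" by (rule degree1_coeffs)
    moreover have "a \<in> \<rat>" "c \<in> \<rat>" using qQ(1) calculation(1) by (auto simp: poly_over_pCons)
    ultimately have "x = - a / c" "- a / c \<in> \<rat>" using qQ(3) by (auto simp: field_simps add_eq_0_iff)
    then show False using x by simp
  qed
  moreover have "degree q = Suc (degree h)"
    using h qQ(2) degree_mult_eq[of "[:-x, 1:]" h] by (cases "h = 0") simp_all
  ultimately have "\<not> constant (poly h)" by (simp add: constant_degree)
  then obtain y where "poly h y = 0" using fundamental_theorem_of_algebra by blast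
  then show ?thesis using that hx h by (metis mult_zero_right poly_mult)
qed

lemma embedding_moves_irrational:
  assumes K: "number_field K" and x: "x \<in> K" "x \<notin> \<rat>"
  obtains \<sigma> where "\<sigma> \<in> embeddings K" "\<sigma> x \<noteq> x"
proof -
  have sf: "subfield_C K" using K by (simp add: number_field_def)
  obtain p where "poly_over \<rat> p" "p \<noteq> 0" "poly p x = 0"
    using number_field_algebraic[OF K x(1)] unfolding algebraic_iff_poly_over_Rats by blast
  then obtain q where q: "minimal_poly \<rat> x q" by (rule minimal_poly_exists)
  obtain y where y: "y \<noteq> x" "poly q y = 0" using minimal_poly_Rats_second_root[OF q x(2)] .
  have id: "hom_on \<rat> (\<lambda>z. z)" by (simp add: hom_on_def)
  obtain t where t: "hom_on (adjoin \<rat> x) t" "t x = y"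
    using hom_on_adjoin_extend[OF subfield_C_Rats id q] y(2) by (metis map_poly_idI)
  have sub: "adjoin \<rat> x \<subseteq> K" using adjoin_subset[OF sf Rats_subset_subfield_C[OF sf] x(1)] .
  have "subfield_C (adjoin \<rat> x)"
    using subfield_C_adjoin[OF subfield_C_Rats] sub number_field_algebraic[OF K] by blast
  then obtain \<sigma> where "\<sigma> \<in> embeddings K" "\<forall>z\<in>adjoin \<rat> x. \<sigma> z = t z"
    using hom_on_extend_to_embedding[OF K _ sub t(1)] by blast
  then show ?thesis using that t(2) y(1) adjoin_gen[OF subfield_C_Rats] by metis
qed

lemma embeddings_comp:
  assumes K: "subfield_C K" and \<sigma>: "\<sigma> \<in> embeddings K" "\<sigma> ` K \<subseteq> K" and \<tau>: "\<tau> \<in> embeddings K"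
  shows "\<tau> \<circ> \<sigma> \<in> embeddings K"
  using \<sigma> \<tau> hom_on_0[OF embeddings_hom_on[OF \<tau>] subfield_C_0[OF K]]
  unfolding embeddings_def by (auto simp: image_subset_iff subfield_C_1[OF K])

lemma inj_on_comp_embeddings:
  assumes K: "subfield_C K" and gal: "galois_over_Q K" and \<tau>: "\<tau> \<in> embeddings K"
  shows "inj_on ((\<circ>) \<tau>) (embeddings K)"
proof (rule inj_onI, rule ext)
  fix \<sigma> \<rho> z assume \<sigma>\<rho>: "\<sigma> \<in> embeddings K" "\<rho> \<in> embeddings K" "\<tau> \<circ> \<sigma> = \<tau> \<circ> \<rho>"
  show "\<sigma> z = \<rho> z"
  proof (cases "z \<in> K")
    case True
    then have "\<sigma> z \<in> K" "\<rho> z \<in> K" using gal \<sigma>\<rho> unfolding galois_over_Q_def by blast+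
    then show ?thesis using hom_on_inj[OF embeddings_hom_on[OF \<tau>] K] \<sigma>\<rho>(3) by (metis comp_apply)
  qed (use \<sigma>\<rho> embeddings_outside in metis)
qed

text \<open>Composition with \<tau> permutes the finitely many embeddings, which only reorders the product.\<close>
lemma field_norm_Q_fixed:
  assumes K: "number_field K" and gal: "galois_over_Q K" and a: "a \<in> K" and \<tau>: "\<tau> \<in> embeddings K"
  shows "\<tau> (field_norm_Q K a) = field_norm_Q K a"
proof -
  have sf: "subfield_C K" using K by (simp add: number_field_def)
  have into_K: "\<sigma> ` K \<subseteq> K" if "\<sigma> \<in> embeddings K" for \<sigma> using gal that by (simp add: galois_over_Q_def)
  have perm: "((\<circ>) \<tau>) ` embeddings K = embeddings K"
    using finite_embeddings[OF K] inj_on_comp_embeddings[OF sf gal \<tau>] embeddings_comp[OF sf _ into_K \<tau>]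
    by (intro endo_inj_surj) auto
  have "\<tau> (field_norm_Q K a) = (\<Prod>\<sigma>\<in>embeddings K. (\<tau> \<circ> \<sigma>) a)"
    unfolding field_norm_Q_def using a into_K
    by (subst hom_on_prod[OF embeddings_hom_on[OF \<tau>] sf]) auto
  also have "\<dots> = (\<Prod>\<rho>\<in>((\<circ>) \<tau>) ` embeddings K. \<rho> a)"
    by (simp add: prod.reindex[OF inj_on_comp_embeddings[OF sf gal \<tau>]])
  finally show ?thesis unfolding perm by (simp add: field_norm_Q_def)
qed

lemma field_norm_Q_in_Rats:
  assumes K: "number_field K" and gal: "galois_over_Q K" and a: "a \<in> K"
  shows "field_norm_Q K a \<in> \<rat>"
proof (rule ccontr)
  assume "field_norm_Q K a \<notin> \<rat>"
  moreover have "field_norm_Q K a \<in> K"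
    using K gal a unfolding field_norm_Q_def number_field_def galois_over_Q_def
    by (blast intro: subfield_C_prod)
  ultimately show False
    using embedding_moves_irrational[OF K] field_norm_Q_fixed[OF K gal a] by metis
qed

lemma cnj_embedding: "\<sigma> \<in> embeddings K \<Longrightarrow> cnj \<circ> \<sigma> \<in> embeddings K"
  unfolding embeddings_def by auto

lemma prod_cnj_involution_nonneg:
  fixes f :: "'a \<Rightarrow> complex"
  assumes "finite G"
    and "\<And>\<sigma>. \<sigma> \<in> G \<Longrightarrow> \<psi> \<sigma> \<in> G \<and> \<psi> (\<psi> \<sigma>) = \<sigma> \<and> \<psi> \<sigma> \<noteq> \<sigma> \<and> f (\<psi> \<sigma>) = cnj (f \<sigma>)"
  shows "\<exists>t\<ge>0. prod f G = complex_of_real t"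
  using assms
proof (induction G rule: finite_psubset_induct)
  case (psubset G)
  show ?case
  proof (cases "G = {}")
    case True then show ?thesis by (intro exI[of _ 1]) auto
  next
    case False
    then obtain \<sigma> where \<sigma>: "\<sigma> \<in> G" by blast
    define G' where "G' = G - {\<sigma>, \<psi> \<sigma>}"
    have \<psi>\<sigma>: "\<psi> \<sigma> \<in> G" "\<psi> \<sigma> \<noteq> \<sigma>" "f (\<psi> \<sigma>) = cnj (f \<sigma>)" using psubset.prems \<sigma> by auto
    have "\<psi> \<rho> \<in> G' \<and> \<psi> (\<psi> \<rho>) = \<rho> \<and> \<psi> \<rho> \<noteq> \<rho> \<and> f (\<psi> \<rho>) = cnj (f \<rho>)" if "\<rho> \<in> G'" for \<rho>
    proof -
      have \<rho>: "\<rho> \<in> G" "\<rho> \<noteq> \<sigma>" "\<rho> \<noteq> \<psi> \<sigma>" using that unfolding G'_def by auto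
      then have "\<psi> \<rho> \<noteq> \<sigma>" "\<psi> \<rho> \<noteq> \<psi> \<sigma>" using psubset.prems \<sigma> by metis+
      then show ?thesis using \<rho> psubset.prems unfolding G'_def by auto
    qed
    moreover have "G' \<subset> G" using \<sigma> unfolding G'_def by blast
    ultimately obtain t where t: "t \<ge> 0" "prod f G' = complex_of_real t" using psubset.IH by blast
    have "prod f G = f \<sigma> * (f (\<psi> \<sigma>) * prod f G')"
      using psubset.hyps \<sigma> \<psi>\<sigma> unfolding G'_def
      by (simp add: prod.remove[of G \<sigma>] prod.remove[of "G - {\<sigma>}" "\<psi> \<sigma>"] Diff_insert2[symmetric] insert_commute)
    also have "\<dots> = complex_of_real ((cmod (f \<sigma>))\<^sup>2 * t)"
      using \<psi>\<sigma>(3) t(2) by (simp add: mult.assoc[symmetric] complex_mult_cnj cmod_power2)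
    finally show ?thesis using t(1) by (intro exI[of _ "(cmod (f \<sigma>))\<^sup>2 * t"]) auto
  qed
qed

text \<open>No embedding is real, so \<sigma> \<mapsto> cnj \<circ> \<sigma> has no fixed point; this needs no Galois hypothesis.\<close>
lemma field_norm_Q_nonneg_real:
  assumes K: "number_field K" and ti: "totally_imaginary K"
  obtains t where "t \<ge> 0" "field_norm_Q K a = complex_of_real t"
proof -
  have "cnj \<circ> \<sigma> \<noteq> \<sigma>" if "\<sigma> \<in> embeddings K" for \<sigma>
  proof
    assume "cnj \<circ> \<sigma> = \<sigma>"
    then have "\<sigma> ` K \<subseteq> \<real>" by (auto simp: Reals_cnj_iff dest: fun_cong)
    then show False using ti that unfolding totally_imaginary_def by blast
  qed
  moreover have "cnj \<circ> (cnj \<circ> \<sigma>) = \<sigma>" for \<sigma> :: "complex \<Rightarrow> complex" by auto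
  ultimately show ?thesis
    using prod_cnj_involution_nonneg[OF finite_embeddings[OF K], of "(\<circ>) cnj" "\<lambda>\<sigma>. \<sigma> a"] that
      cnj_embedding
    unfolding field_norm_Q_def by auto
qed

lemma complex_of_rat_eq_of_real: "(of_rat r :: complex) = complex_of_real (of_rat r)"
  by (cases r) (simp add: of_rat_rat)

lemma field_norm_Q_nonneg_rat:
  assumes "number_field K" "galois_over_Q K" "totally_imaginary K" "a \<in> K"
  shows "field_norm_Q K a \<in> of_rat ` {q. q \<ge> 0}"
proof -
  obtain r where r: "field_norm_Q K a = of_rat r"
    using field_norm_Q_in_Rats[OF assms(1,2,4)] by (auto elim: Rats_cases)
  obtain t where "t \<ge> 0" "field_norm_Q K a = complex_of_real t"
    using field_norm_Q_nonneg_real[OF assms(1,3)] .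
  then have "r \<ge> 0" using r complex_of_rat_eq_of_real by (metis of_real_eq_iff zero_le_of_rat_iff)
  then show ?thesis using r by blast
qed

lemma field_norm_Q_of_rat:
  assumes K: "subfield_C K"
  shows "field_norm_Q K (of_rat c) = of_rat c ^ card (embeddings K)"
proof -
  have "field_norm_Q K (of_rat c) = (\<Prod>\<sigma>\<in>embeddings K. of_rat c)"
    unfolding field_norm_Q_def
    by (rule prod.cong) (auto intro: hom_on_Rats[OF embeddings_hom_on K])
  then show ?thesis by simp
qed

lemma sum_list_nonneg_rats:
  "set xs \<subseteq> of_rat ` {q. q \<ge> 0} \<Longrightarrow> sum_list xs \<in> (of_rat ` {q. q \<ge> 0} :: 'a::field_char_0 set)"
proof (induction xs)
  case Nil
  show ?case by (auto intro: image_eqI[of _ _ 0])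
next
  case (Cons x xs)
  then obtain r s where "x = of_rat r" "r \<ge> 0" "sum_list xs = of_rat s" "s \<ge> 0" by auto
  then show ?case by (auto intro!: image_eqI[of _ _ "r + s"] simp: of_rat_add)
qed

lemma sums_of_norms_subset_nonneg_rats:
  assumes "number_field K" "galois_over_Q K" "totally_imaginary K"
  shows "sums_of_norms K \<subseteq> of_rat ` {q. q \<ge> 0}"
  using field_norm_Q_nonneg_rat[OF assms] unfolding sums_of_norms_def
  by (auto intro!: sum_list_nonneg_rats, blast)

lemma identity_in_embeddings: "subfield_C K \<Longrightarrow> (\<lambda>z. if z \<in> K then z else 0) \<in> embeddings K"
  unfolding embeddings_def by (auto simp: subfield_C_add subfield_C_mult subfield_C_1)

lemma nonneg_rats_subset_sums_of_norms:
  assumes K: "number_field K"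
  shows "of_rat ` {q. q \<ge> 0} \<subseteq> sums_of_norms K"
proof
  fix z :: complex assume "z \<in> of_rat ` {q. q \<ge> 0}"
  then obtain q where q: "q \<ge> 0" "z = of_rat q" by blast
  have sf: "subfield_C K" using K by (simp add: number_field_def)
  obtain n where n: "card (embeddings K) = Suc n"
    using finite_embeddings[OF K] identity_in_embeddings[OF sf] by (metis card_0_eq empty_iff not0_implies_Suc)
  obtain a b where ab: "quotient_of q = (a, b)" by force
  have b: "b > 0" using quotient_of_denom_pos[OF ab] .
  have q_ab: "q = of_int a / of_int b" using quotient_of_div[OF ab] .
  with q(1) b have a: "a \<ge> 0" by (simp add: zero_le_divide_iff)
  define c :: rat where "c = 1 / of_int b"
  define m where "m = nat a * nat b ^ n"
  have "q = of_nat m * c ^ Suc n"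
    using a b unfolding m_def c_def q_ab by (simp add: field_simps power_divide)
  then have "z = of_nat m * field_norm_Q K (of_rat c)"
    using q(2) field_norm_Q_of_rat[OF sf] n by (metis of_rat_mult of_rat_of_nat_eq of_rat_power)
  also have "\<dots> = sum_list (map (field_norm_Q K) (replicate m (of_rat c)))"
    by (simp add: sum_list_replicate)
  finally show "z \<in> sums_of_norms K"
    unfolding sums_of_norms_def using subfield_C_of_rat[OF sf] by fastforce
qed

theorem mainTheorem9:
  fixes K :: "complex set"
  assumes "number_field K"
    and "galois_over_Q K"
    and "totally_imaginary K"
  shows "sums_of_norms K = of_rat ` {q :: rat. q \<ge> 0}"
  using sums_of_norms_subset_nonneg_rats[OF assms] nonneg_rats_subset_sums_of_norms[OF assms(1)]
  by (rule equalityI)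

end
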